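(* Let $q$ be a prime power, $m\ge1$, $1\le k\le n$, $g_1,\dots,g_n\in\mathbb{F}_{q^m}$ linearly independent over $\mathbb{F}_q$, $\mathbf g=(g_1,\dots,g_n)$, $\mathbf r=(r_1,\dots,r_n)\in\mathbb{F}_{q^m}^n$. Then Algorithm 3 (described in the context) has computational complexity order $\mathcal{O}_{q^m}(n^2)$.
   Context: Write $[i]:=q^i$. A $q$-linearized polynomial is $f(x)=\sum_{i=0}^{d}a_ix^{[i]}$, $a_i\in\mathbb{F}_{q^m}$; if $a_d\ne0$, $d=\mathrm{qdeg}(f)$ ($\mathrm{qdeg}(0)=-\infty$). $\mathcal{L}_q(x,q^m)$ is the ring of these under addition and composition $\circ$. Composition of $2\times2$ matrices over $\mathcal{L}_q(x,q^m)$ is defined like matrix multiplication with products replaced by composition. Algorithm 3 (input $k,\mathbf g,\mathbf r$): $B_0=\begin{bmatrix}x&0\\0&x\end{bmatrix}$; writing $B_i=\begin{bmatrix}P_i&-K_i\\N_i&-D_i\end{bmatrix}$, for $i=1,\dots,n$: $\Gamma_i:=P_{i-1}(g_i)-K_{i-1}(r_i)$, $\Delta_i:=N_{i-1}(g_i)-D_{i-1}(r_i)$; if [$\mathrm{qdeg}(P_{i-1})\le\mathrm{qdeg}(D_{i-1})+k-1$ and $\Gamma_i\ne0$] or $\Delta_i=0$, then $B_i:=\begin{bmatrix}x^q-\Gamma_i^{q-1}x&0\\\Delta_ix&-\Gamma_ix\end{bmatrix}\circ B_{i-1}$; else $B_i:=\begin{bmatrix}\Delta_ix&-\Gamma_ix\\0&x^q-\Delta_i^{q-1}x\end{bmatrix}\circ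 B_{i-1}$. Return $B_n$. Complexity conventions: elements of $\mathbb{F}_{q^m}$ are stored w.r.t. a normal basis of $\mathbb{F}_{q^m}$ over $\mathbb{F}_q$, so $q$-th powers are free; $\mathcal{O}_{q^m}(\cdot)$ counts arithmetic operations in $\mathbb{F}_{q^m}$. *)

theory Defs
  imports "HOL-Computational_Algebra.Primes"
begin

text \<open>Cost model: a q-linearized polynomial sum_i a_i x^[i] is stored as its coefficient
list [a_0, a_1, ...] (the empty list is 0).  Every function below returns its result
together with the number of arithmetic operations in the field performed
(additions, subtractions, negations, multiplications, divisions each cost 1).
Raising to the q-th power costs 0 (normal basis representation); zero tests and
q-degree comparisons are not arithmetic operations and cost 0.\<close>

definition prime_power :: "nat \<Rightarrow> bool" where
  "prime_power q \<longleftrightarrow> (\<exists>p e. prime p \<and> e \<ge> 1 \<and> q = p ^ e)"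

text \<open>g_1..g_n linearly independent over F_q = {x. x^q = x}\<close>
definition lin_indep_Fq :: "nat \<Rightarrow> (nat \<Rightarrow> 'a::field) \<Rightarrow> nat \<Rightarrow> bool" where
  "lin_indep_Fq q g n \<longleftrightarrow>
     (\<forall>c. (\<forall>i\<in>{1..n}. c i ^ q = c i) \<and> (\<Sum>i=1..n. c i * g i) = 0
          \<longrightarrow> (\<forall>i\<in>{1..n}. c i = 0))"

text \<open>q-degree; None stands for -infinity (the zero polynomial)\<close>
definition qdeg :: "'a::zero list \<Rightarrow> int option" where
  "qdeg f = (if \<forall>a\<in>set f. a = 0 then None
             else Some (int (Max {i. i < length f \<and> f ! i \<noteq> 0})))"

definition qdeg_test :: "'a::zero list \<Rightarrow> 'a list \<Rightarrow> nat \<Rightarrow> bool" where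
  "qdeg_test P D k = (case qdeg P of None \<Rightarrow> True
       | Some dp \<Rightarrow> (case qdeg D of None \<Rightarrow> False | Some dd \<Rightarrow> dp \<le> dd + int k - 1))"

text \<open>evaluation f(x) = sum_j a_j x^(q^j)\<close>
fun ev :: "nat \<Rightarrow> 'a::field list \<Rightarrow> 'a \<Rightarrow> 'a \<times> nat" where
  "ev q [] x = (0, 0)"
| "ev q (a # f) x = (let (v, c) = ev q f (x ^ q) in (a * x + v, c + 2))"

fun psub :: "'a::field list \<Rightarrow> 'a list \<Rightarrow> 'a list \<times> nat" where
  "psub [] h = (map uminus h, length h)"
| "psub f [] = (f, 0)"
| "psub (a # f) (b # h) = (let (s, c) = psub f h in ((a - b) # s, c + 1))"

definition smul :: "'a::field \<Rightarrow> 'a list \<Rightarrow> 'a list \<times> nat" where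
  "smul c f = (map (\<lambda>a. c * a) f, length f)"

text \<open>x^q \<circ> f, free\<close>
definition frob :: "nat \<Rightarrow> 'a::field list \<Rightarrow> 'a list" where
  "frob q f = 0 # map (\<lambda>a. a ^ q) f"

text \<open>(x^q - \<gamma> x) \<circ> f\<close>
definition comp_lin :: "nat \<Rightarrow> 'a::field \<Rightarrow> 'a list \<Rightarrow> 'a list \<times> nat" where
  "comp_lin q \<gamma> f = (let (u, c1) = smul \<gamma> f; (w, c2) = psub (frob q f) u in (w, c1 + c2))"

text \<open>(\<Delta> x) \<circ> F - (\<Gamma> x) \<circ> G\<close>
definition lin2 :: "'a::field \<Rightarrow> 'a \<Rightarrow> 'a list \<Rightarrow> 'a list \<Rightarrow> 'a list \<times> nat" where
  "lin2 \<Delta> \<Gamma> F G = (let (u, c1) = smul \<Delta> F; (v, c2) = smul \<Gamma> G; (w, c3) = psub u v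
                     in (w, c1 + c2 + c3))"

text \<open>\<Gamma>^(q-1) = \<Gamma>^q / \<Gamma> (q-th power free, one division)\<close>
definition qpow1 :: "nat \<Rightarrow> 'a::field \<Rightarrow> 'a \<times> nat" where
  "qpow1 q \<Gamma> = (\<Gamma> ^ (q - 1), 1)"

text \<open>A matrix B = [P, -K; N, -D] is stored as (P, K, N, D).  One iteration of Algorithm 3.\<close>
definition alg_step :: "nat \<Rightarrow> nat \<Rightarrow> 'a::field list \<times> 'a list \<times> 'a list \<times> 'a list
    \<Rightarrow> 'a \<Rightarrow> 'a \<Rightarrow> ('a list \<times> 'a list \<times> 'a list \<times> 'a list) \<times> nat" where
  "alg_step q k B gi ri = (case B of (P, K, N, D) \<Rightarrow>
     let (e1, c1) = ev q P gi; (e2, c2) = ev q K ri; \<Gamma> = e1 - e2;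
         (e3, c3) = ev q N gi; (e4, c4) = ev q D ri; \<Delta> = e3 - e4;
         base = c1 + c2 + c3 + c4 + 2
     in if (qdeg_test P D k \<and> \<Gamma> \<noteq> 0) \<or> \<Delta> = 0 then
          (let (\<gamma>, c5) = qpow1 q \<Gamma>; (P', c6) = comp_lin q \<gamma> P; (K', c7) = comp_lin q \<gamma> K;
               (N', c8) = lin2 \<Delta> \<Gamma> P N; (D', c9) = lin2 \<Delta> \<Gamma> K D
           in ((P', K', N', D'), base + c5 + c6 + c7 + c8 + c9))
        else
          (let (P', c5) = lin2 \<Delta> \<Gamma> P N; (K', c6) = lin2 \<Delta> \<Gamma> K D; (\<delta>, c7) = qpow1 q \<Delta>;
               (N', c8) = comp_lin q \<delta> N; (D', c9) = comp_lin q \<delta> D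
           in ((P', K', N', D'), base + c5 + c6 + c7 + c8 + c9)))"

text \<open>Algorithm 3 run for i iterations: returns B_i and the total operation count.
B_0 = [x, 0; 0, x], i.e. P = x, K = 0, N = 0, D = -x.\<close>
fun alg3 :: "nat \<Rightarrow> nat \<Rightarrow> (nat \<Rightarrow> 'a::field) \<Rightarrow> (nat \<Rightarrow> 'a) \<Rightarrow> nat
    \<Rightarrow> ('a list \<times> 'a list \<times> 'a list \<times> 'a list) \<times> nat" where
  "alg3 q k g r 0 = (([1], [], [], [-1]), 0)"
| "alg3 q k g r (Suc i) = (let (B, c) = alg3 q k g r i; (B', c') = alg_step q k B (g (Suc i)) (r (Suc i))
                          in (B', c + c'))"

end

theory Submission
  imports Defs
begin

text \<open>Every primitive costs at most a constant per coefficient of its inputs, and each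
iteration of Algorithm 3 lengthens the four entries of B by at most one coefficient.
Hence iteration i costs O(i), and summing over the n iterations gives O(n^2).  The
count depends on neither the field nor the inputs.\<close>

lemma ev_cost: "snd (ev q f x) = 2 * length f"
  by (induction f arbitrary: x) (auto simp: split_def Let_def)

lemma psub_length [simp]: "length (fst (psub f h)) = max (length f) (length h)"
  by (induction f h rule: psub.induct) (auto simp: split_def Let_def)

lemma psub_cost [simp]: "snd (psub f h) = length h"
  by (induction f h rule: psub.induct) (auto simp: split_def Let_def)

lemma comp_lin_length [simp]: "length (fst (comp_lin q \<gamma> f)) = Suc (length f)"
  and comp_lin_cost [simp]: "snd (comp_lin q \<gamma> f) = 2 * length f"
  by (simp_all add: comp_lin_def smul_def frob_def split_def Let_def)

lemma lin2_length [simp]: "length (fst (lin2 \<Delta> \<Gamma> F G)) = max (length F) (length G)"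
  and lin2_cost [simp]: "snd (lin2 \<Delta> \<Gamma> F G) = length F + 2 * length G"
  by (simp_all add: lin2_def smul_def split_def Let_def)

definition width :: "'a list \<times> 'a list \<times> 'a list \<times> 'a list \<Rightarrow> nat" where
  "width B = (case B of (P, K, N, D) \<Rightarrow> max (max (length P) (length K)) (max (length N) (length D)))"

lemma alg_step_width: "width (fst (alg_step q k B x y)) \<le> Suc (width B)"
  by (cases B) (auto simp: alg_step_def qpow1_def width_def split_def Let_def)

lemma alg_step_cost: "snd (alg_step q k B x y) \<le> 18 * width B + 3"
  by (cases B) (auto simp: alg_step_def qpow1_def width_def split_def Let_def ev_cost)

lemma alg3_width: "width (fst (alg3 q k g r i)) \<le> Suc i"
proof (induction i)
  case 0
  show ?case by (simp add: width_def)
next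
  case (Suc i)
  then show ?case
    using alg_step_width [of q k "fst (alg3 q k g r i)"]
    by (simp add: split_def Let_def) (meson Suc_le_mono le_trans)
qed

lemma alg3_cost: "snd (alg3 q k g r i) \<le> 9 * i\<^sup>2 + 12 * i"
proof (induction i)
  case 0
  show ?case by simp
next
  case (Suc i)
  have "snd (alg3 q k g r (Suc i))
      = snd (alg3 q k g r i) + snd (alg_step q k (fst (alg3 q k g r i)) (g (Suc i)) (r (Suc i)))"
    by (simp add: split_def Let_def)
  also have "\<dots> \<le> (9 * i\<^sup>2 + 12 * i) + (18 * Suc i + 3)"
    using Suc.IH alg_step_cost [of q k "fst (alg3 q k g r i)"] alg3_width [of q k g r i]
    by (meson add_mono le_trans mult_le_mono2 add_le_mono1)
  also have "\<dots> = 9 * (Suc i)\<^sup>2 + 12 * Suc i"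
    by (simp add: power2_eq_square algebra_simps)
  finally show ?case .
qed

theorem proposition39:
  fixes q m n k :: nat and g r :: "nat \<Rightarrow> 'a::{finite,field}"
  assumes "prime_power q" and "m \<ge> 1" and "card (UNIV :: 'a set) = q ^ m"
    and "1 \<le> k" and "k \<le> n"
    and "lin_indep_Fq q g n"
  shows "snd (alg3 q k g r n) \<le> 30 * n ^ 2"
proof -
  have "snd (alg3 q k g r n) \<le> 9 * n\<^sup>2 + 12 * n"
    by (rule alg3_cost)
  also have "12 * n \<le> 21 * n\<^sup>2"
    by (simp add: power2_eq_square)
  finally show ?thesis by simp
qed

end
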